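(* For any two tensors $\mathcal{L}_0,\mathcal{E}_0\in\mathbb{R}^{N_1\times N_2\times N_3}$, if $\xi(\mathcal{L}_0)\,\mu(\mathcal{E}_0)<1$ then $T(\mathcal{L}_0)\cap\Omega(\mathcal{E}_0)=\{\mathbf{0}\}$.
   Context: For $\mathcal{A}\in\mathbb{R}^{N_1\times N_2\times N_3}$ write $A^{(k)}=\mathcal{A}(:,:,k)$ for its frontal slices. $\mathrm{bcirc}(\mathcal{A})\in\mathbb{R}^{N_1N_3\times N_2N_3}$ is the block circulant matrix whose $(i,j)$ block is $A^{(((i-j)\bmod N_3)+1)}$; $\mathrm{unfold}(\mathcal{A})$ stacks the frontal slices vertically and $\mathrm{fold}$ is its inverse. The t-product is $\mathcal{A}*\mathcal{B}=\mathrm{fold}(\mathrm{bcirc}(\mathcal{A})\,\mathrm{unfold}(\mathcal{B}))$. The transpose $\mathcal{A}^\top$ transposes each frontal slice and reverses the order of slices $2,\dots,N_3$. The identity tensor has first frontal slice the identity matrix and other slices zero; f-diagonal means every frontal slice is diagonal. Every $\mathcal{A}$ of tubal rank $R$ has a skinny t-SVD $\mathcal{A}=\mathcal{U}*\mathcal{S}*\mathcal{V}^\top$, $\mathcal{U}\in\mathbb{R}^{N_1\times R\times N_3}$, $\mathcal{V}\in\mathbb{R}^{N_2\times R\times N_3}$, $\mathcal{U}^\top*\mathcal{U}=\mathcal{V}^\top*\mathcal{V}=\mathcal{I}$, $\mathcal{S}\in\mathbb{R}^{R\times R\times N_3}$ f-diagonal. The tensor spectral norm is $\|\mathcal{A}\|=\|\mathrm{bcirc}(\mathcal{A})\|$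 (largest singular value); $\|\mathcal{A}\|_\infty=\max|\mathcal{A}(n_1,n_2,n_3)|$. $T(\mathcal{A})=\{\mathcal{U}*\mathcal{Y}^\top+\mathcal{W}*\mathcal{V}^\top:\mathcal{Y}\in\mathbb{R}^{N_2\times R\times N_3},\mathcal{W}\in\mathbb{R}^{N_1\times R\times N_3}\}$; $\Omega(\mathcal{A})=\{\mathcal{N}:\mathrm{support}(\mathcal{N})\subseteq\mathrm{support}(\mathcal{A})\}$. Define $\xi(\mathcal{A})=\max_{\mathcal{N}\in T(\mathcal{A}),\|\mathcal{N}\|\le1}\|\mathcal{N}\|_\infty$ and $\mu(\mathcal{A})=\max_{\mathcal{N}\in\Omega(\mathcal{A}),\|\mathcal{N}\|_\infty\le1}\|\mathcal{N}\|$. *)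

theory Defs
  imports Complex_Main
begin

text \<open>Tensors in R^(N1 x N2 x N3) are represented as functions nat => nat => nat => real,
  0-indexed, and required to vanish outside the index box.
  Frontal slice k (0-based) is A(:,:,k).\<close>

type_synonym tensor = "nat \<Rightarrow> nat \<Rightarrow> nat \<Rightarrow> real"
type_synonym mat = "nat \<Rightarrow> nat \<Rightarrow> real"

definition is_tensor :: "nat \<Rightarrow> nat \<Rightarrow> nat \<Rightarrow> tensor \<Rightarrow> bool" where
  "is_tensor N1 N2 N3 A \<longleftrightarrow>
     (\<forall>i j k. \<not> (i < N1 \<and> j < N2 \<and> k < N3) \<longrightarrow> A i j k = 0)"

definition zero_tensor :: tensor where
  "zero_tensor = (\<lambda>_ _ _. 0)"

definition tadd :: "tensor \<Rightarrow> tensor \<Rightarrow> tensor" where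
  "tadd A B = (\<lambda>i j k. A i j k + B i j k)"

text \<open>Block circulant matrix (N1*N3) x (N2*N3): block (p,q) (0-based) is slice ((p - q) mod N3).\<close>
definition bcirc :: "nat \<Rightarrow> nat \<Rightarrow> nat \<Rightarrow> tensor \<Rightarrow> mat" where
  "bcirc N1 N2 N3 A = (\<lambda>r c.
     if r < N1 * N3 \<and> c < N2 * N3
     then A (r mod N1) (c mod N2) (nat ((int (r div N1) - int (c div N2)) mod int N3))
     else 0)"

definition unfold :: "nat \<Rightarrow> nat \<Rightarrow> nat \<Rightarrow> tensor \<Rightarrow> mat" where
  "unfold N1 N2 N3 A = (\<lambda>r c.
     if r < N1 * N3 \<and> c < N2 then A (r mod N1) c (r div N1) else 0)"

definition fold :: "nat \<Rightarrow> nat \<Rightarrow> nat \<Rightarrow> mat \<Rightarrow> tensor" where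
  "fold N1 N2 N3 M = (\<lambda>i j k.
     if i < N1 \<and> j < N2 \<and> k < N3 then M (k * N1 + i) j else 0)"

definition matmul :: "nat \<Rightarrow> mat \<Rightarrow> mat \<Rightarrow> mat" where
  "matmul K M L = (\<lambda>r c. \<Sum>t<K. M r t * L t c)"

definition tprod :: "nat \<Rightarrow> nat \<Rightarrow> nat \<Rightarrow> nat \<Rightarrow> tensor \<Rightarrow> tensor \<Rightarrow> tensor" where
  "tprod N1 N2 N3 N4 A B =
     fold N1 N4 N3 (matmul (N2 * N3) (bcirc N1 N2 N3 A) (unfold N2 N4 N3 B))"

text \<open>Tensor transpose of A in R^(N1 x N2 x N3): transpose each slice and reverse slices 2..N3.\<close>
definition ttrans :: "nat \<Rightarrow> nat \<Rightarrow> nat \<Rightarrow> tensor \<Rightarrow> tensor" where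
  "ttrans N1 N2 N3 A = (\<lambda>i j k.
     if i < N2 \<and> j < N1 \<and> k < N3 then A j i ((N3 - k) mod N3) else 0)"

definition tidentity :: "nat \<Rightarrow> nat \<Rightarrow> tensor" where
  "tidentity R N3 = (\<lambda>i j k. if i < R \<and> j < R \<and> k < N3 \<and> k = 0 \<and> i = j then 1 else 0)"

definition f_diagonal :: "tensor \<Rightarrow> bool" where
  "f_diagonal S \<longleftrightarrow> (\<forall>i j k. i \<noteq> j \<longrightarrow> S i j k = 0)"

text \<open>Skinny t-SVD A = U * S * V^T with R = tubal rank (all R diagonal tubes of S nonzero).\<close>
definition skinny_tsvd ::
  "nat \<Rightarrow> nat \<Rightarrow> nat \<Rightarrow> tensor \<Rightarrow> nat \<Rightarrow> tensor \<Rightarrow> tensor \<Rightarrow> tensor \<Rightarrow> bool" where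
  "skinny_tsvd N1 N2 N3 A R U S V \<longleftrightarrow>
     is_tensor N1 R N3 U \<and> is_tensor R R N3 S \<and> is_tensor N2 R N3 V \<and>
     A = tprod N1 R N3 N2 (tprod N1 R N3 R U S) (ttrans N2 R N3 V) \<and>
     tprod R N1 N3 R (ttrans N1 R N3 U) U = tidentity R N3 \<and>
     tprod R N2 N3 R (ttrans N2 R N3 V) V = tidentity R N3 \<and>
     f_diagonal S \<and>
     (\<forall>i<R. \<exists>k<N3. S i i k \<noteq> 0)"

text \<open>Largest singular value of an m x n matrix = its operator 2-norm.\<close>
definition opnorm2 :: "nat \<Rightarrow> nat \<Rightarrow> mat \<Rightarrow> real" where
  "opnorm2 m n M = Sup {sqrt (\<Sum>r<m. (\<Sum>c<n. M r c * x c)\<^sup>2) | x.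
                          (\<Sum>c<n. (x c)\<^sup>2) \<le> 1}"

definition specnorm :: "nat \<Rightarrow> nat \<Rightarrow> nat \<Rightarrow> tensor \<Rightarrow> real" where
  "specnorm N1 N2 N3 A = opnorm2 (N1 * N3) (N2 * N3) (bcirc N1 N2 N3 A)"

definition infnorm :: "nat \<Rightarrow> nat \<Rightarrow> nat \<Rightarrow> tensor \<Rightarrow> real" where
  "infnorm N1 N2 N3 A =
     Max (insert 0 {\<bar>A i j k\<bar> | i j k. i < N1 \<and> j < N2 \<and> k < N3})"

text \<open>Tangent space T(A), given the skinny t-SVD factors U (N1 x R x N3), V (N2 x R x N3).\<close>
definition Tspace :: "nat \<Rightarrow> nat \<Rightarrow> nat \<Rightarrow> nat \<Rightarrow> tensor \<Rightarrow> tensor \<Rightarrow> tensor set" where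
  "Tspace N1 N2 N3 R U V =
     {tadd (tprod N1 R N3 N2 U (ttrans N2 R N3 Y)) (tprod N1 R N3 N2 W (ttrans N2 R N3 V)) | Y W.
        is_tensor N2 R N3 Y \<and> is_tensor N1 R N3 W}"

definition Omega :: "nat \<Rightarrow> nat \<Rightarrow> nat \<Rightarrow> tensor \<Rightarrow> tensor set" where
  "Omega N1 N2 N3 A =
     {N. is_tensor N1 N2 N3 N \<and> (\<forall>i j k. N i j k \<noteq> 0 \<longrightarrow> A i j k \<noteq> 0)}"

definition xi :: "nat \<Rightarrow> nat \<Rightarrow> nat \<Rightarrow> nat \<Rightarrow> tensor \<Rightarrow> tensor \<Rightarrow> real" where
  "xi N1 N2 N3 R U V =
     Sup {infnorm N1 N2 N3 N | N. N \<in> Tspace N1 N2 N3 R U V \<and> specnorm N1 N2 N3 N \<le> 1}"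

definition mu :: "nat \<Rightarrow> nat \<Rightarrow> nat \<Rightarrow> tensor \<Rightarrow> real" where
  "mu N1 N2 N3 A =
     Sup {specnorm N1 N2 N3 N | N. N \<in> Omega N1 N2 N3 A \<and> infnorm N1 N2 N3 N \<le> 1}"

end

theory Submission
  imports Defs
begin

text \<open>If \<open>N \<noteq> 0\<close> lies in both spaces, then, since \<open>T(\<L>\<^sub>0)\<close> and \<open>\<Omega>(\<E>\<^sub>0)\<close> are cones,
  \<open>N/\<parallel>N\<parallel>\<close> is admissible in the definition of \<open>\<xi>\<close> and \<open>N/\<parallel>N\<parallel>\<^sub>\<infinity>\<close> in that of \<open>\<mu>\<close>.
  Hence \<open>\<xi> \<ge> \<parallel>N\<parallel>\<^sub>\<infinity>/\<parallel>N\<parallel>\<close> and \<open>\<mu> \<ge> \<parallel>N\<parallel>/\<parallel>N\<parallel>\<^sub>\<infinity>\<close>, so \<open>\<xi> \<mu> \<ge> 1\<close>.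
  Both suprema are over bounded sets because \<open>\<parallel>N\<parallel>\<^sub>\<infinity> \<le> \<parallel>N\<parallel> \<le> C \<parallel>N\<parallel>\<^sub>\<infinity>\<close> with \<open>C\<close> depending
  only on the dimensions.\<close>

lemma ratio_le_Sup_of_homogeneous:
  fixes f g :: "'a \<Rightarrow> real" and smult :: "real \<Rightarrow> 'a \<Rightarrow> 'a"
  assumes cone: "\<And>c y. 0 < c \<Longrightarrow> y \<in> C \<Longrightarrow> smult c y \<in> C"
    and f_homogeneous: "\<And>c y. 0 < c \<Longrightarrow> f (smult c y) = c * f y"
    and g_homogeneous: "\<And>c y. 0 < c \<Longrightarrow> g (smult c y) = c * g y"
    and bdd: "bdd_above {f y | y. y \<in> C \<and> g y \<le> 1}"
    and x: "x \<in> C" and gx_pos: "0 < g x"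
  shows "f x / g x \<le> Sup {f y | y. y \<in> C \<and> g y \<le> 1}"
proof -
  let ?y = "smult (1 / g x) x"
  have "?y \<in> C" "g ?y \<le> 1"
    using x gx_pos by (simp_all add: cone g_homogeneous)
  then have "f ?y \<le> Sup {f y | y. y \<in> C \<and> g y \<le> 1}"
    by (intro cSup_upper bdd) blast
  then show ?thesis
    using gx_pos by (simp add: f_homogeneous)
qed

lemma matvec_norm_le_row_sums:
  fixes M :: mat and x :: "nat \<Rightarrow> real"
  assumes "(\<Sum>c<n. (x c)\<^sup>2) \<le> 1"
  shows "sqrt (\<Sum>r<m. (\<Sum>c<n. M r c * x c)\<^sup>2) \<le> sqrt (\<Sum>r<m. (\<Sum>c<n. \<bar>M r c\<bar>)\<^sup>2)"
proof -
  have x_le_1: "\<bar>x c\<bar> \<le> 1" if "c < n" for c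
  proof -
    have "(x c)\<^sup>2 \<le> (\<Sum>c<n. (x c)\<^sup>2)"
      using that by (intro member_le_sum) auto
    with assms have "(x c)\<^sup>2 \<le> 1"
      by linarith
    then show ?thesis
      by (simp add: abs_square_le_1)
  qed
  have "\<bar>\<Sum>c<n. M r c * x c\<bar> \<le> (\<Sum>c<n. \<bar>M r c\<bar>)" for r
  proof -
    have "\<bar>\<Sum>c<n. M r c * x c\<bar> \<le> (\<Sum>c<n. \<bar>M r c\<bar> * \<bar>x c\<bar>)"
      using sum_abs[of "\<lambda>c. M r c * x c" "{..<n}"] by (simp add: abs_mult)
    also have "\<dots> \<le> (\<Sum>c<n. \<bar>M r c\<bar>)"
      using x_le_1 by (intro sum_mono) (simp add: mult_left_le)
    finally show ?thesis .
  qed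
  then have "\<bar>\<Sum>c<n. M r c * x c\<bar>\<^sup>2 \<le> (\<Sum>c<n. \<bar>M r c\<bar>)\<^sup>2" for r
    by (intro power_mono) simp_all
  then have "(\<Sum>c<n. M r c * x c)\<^sup>2 \<le> (\<Sum>c<n. \<bar>M r c\<bar>)\<^sup>2" for r
    by simp
  then show ?thesis
    by (intro real_sqrt_le_mono sum_mono)
qed

lemma opnorm2_bdd_above:
  fixes M :: mat
  shows "bdd_above {sqrt (\<Sum>r<m. (\<Sum>c<n. M r c * x c)\<^sup>2) | x. (\<Sum>c<n. (x c)\<^sup>2) \<le> 1}"
  unfolding bdd_above_def using matvec_norm_le_row_sums by blast

lemma opnorm2_upper:
  assumes "(\<Sum>c<n. (x c)\<^sup>2) \<le> 1"
  shows "sqrt (\<Sum>r<m. (\<Sum>c<n. M r c * x c)\<^sup>2) \<le> opnorm2 m n M"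
  unfolding opnorm2_def using assms by (intro cSup_upper opnorm2_bdd_above) blast

lemma opnorm2_least:
  assumes "\<And>x. (\<Sum>c<n. (x c)\<^sup>2) \<le> 1 \<Longrightarrow> sqrt (\<Sum>r<m. (\<Sum>c<n. M r c * x c)\<^sup>2) \<le> b"
  shows "opnorm2 m n M \<le> b"
  unfolding opnorm2_def
proof (rule cSup_least)
  have "(\<Sum>c<n. ((\<lambda>_. 0 :: real) c)\<^sup>2) \<le> 1"
    by simp
  then show "{sqrt (\<Sum>r<m. (\<Sum>c<n. M r c * x c)\<^sup>2) | x. (\<Sum>c<n. (x c)\<^sup>2) \<le> 1} \<noteq> {}"
    by (auto simp only: ex_in_conv[symmetric] mem_Collect_eq)
next
  fix y
  assume "y \<in> {sqrt (\<Sum>r<m. (\<Sum>c<n. M r c * x c)\<^sup>2) | x. (\<Sum>c<n. (x c)\<^sup>2) \<le> 1}"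
  then obtain x where "y = sqrt (\<Sum>r<m. (\<Sum>c<n. M r c * x c)\<^sup>2)" "(\<Sum>c<n. (x c)\<^sup>2) \<le> 1"
    by blast
  then show "y \<le> b"
    using assms by simp
qed

lemma opnorm2_nonneg: "0 \<le> opnorm2 m n M"
  using opnorm2_upper[where x = "\<lambda>_. 0" and n = n and m = m and M = M] by simp

lemma opnorm2_le_row_sums: "opnorm2 m n M \<le> sqrt (\<Sum>r<m. (\<Sum>c<n. \<bar>M r c\<bar>)\<^sup>2)"
  by (intro opnorm2_least matvec_norm_le_row_sums)

lemma opnorm2_scale_le:
  assumes "0 \<le> a"
  shows "opnorm2 m n (\<lambda>r c. a * M r c) \<le> a * opnorm2 m n M"
proof (rule opnorm2_least)
  fix x :: "nat \<Rightarrow> real"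
  assume x: "(\<Sum>c<n. (x c)\<^sup>2) \<le> 1"
  have "(\<Sum>c<n. a * M r c * x c) = a * (\<Sum>c<n. M r c * x c)" for r
    by (simp only: sum_distrib_left mult.assoc)
  then have "(\<Sum>r<m. (\<Sum>c<n. a * M r c * x c)\<^sup>2) = (\<Sum>r<m. a\<^sup>2 * (\<Sum>c<n. M r c * x c)\<^sup>2)"
    by (simp only: power_mult_distrib)
  also have "\<dots> = a\<^sup>2 * (\<Sum>r<m. (\<Sum>c<n. M r c * x c)\<^sup>2)"
    by (simp only: sum_distrib_left)
  finally have "sqrt (\<Sum>r<m. (\<Sum>c<n. a * M r c * x c)\<^sup>2) = a * sqrt (\<Sum>r<m. (\<Sum>c<n. M r c * x c)\<^sup>2)"
    using assms by (simp add: real_sqrt_mult)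
  also have "\<dots> \<le> a * opnorm2 m n M"
    using assms x by (intro mult_left_mono opnorm2_upper)
  finally show "sqrt (\<Sum>r<m. (\<Sum>c<n. a * M r c * x c)\<^sup>2) \<le> a * opnorm2 m n M" .
qed

lemma opnorm2_scale:
  assumes "0 < a"
  shows "opnorm2 m n (\<lambda>r c. a * M r c) = a * opnorm2 m n M"
proof (rule antisym)
  have "opnorm2 m n M = opnorm2 m n (\<lambda>r c. (1 / a) * (a * M r c))"
    using assms by simp
  also have "\<dots> \<le> (1 / a) * opnorm2 m n (\<lambda>r c. a * M r c)"
    using assms by (intro opnorm2_scale_le) simp
  finally show "a * opnorm2 m n M \<le> opnorm2 m n (\<lambda>r c. a * M r c)"
    using assms by (simp add: field_simps)
qed (use assms opnorm2_scale_le in simp)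

lemma abs_entry_le_opnorm2:
  assumes "r0 < m" "c0 < n"
  shows "\<bar>M r0 c0\<bar> \<le> opnorm2 m n M"
proof -
  define e where "e = (\<lambda>c. if c = c0 then 1 else (0 :: real))"
  have e_squared: "(\<lambda>c. (e c)\<^sup>2) = e"
    by (auto simp: e_def)
  have "(\<Sum>c<n. (e c)\<^sup>2) = 1"
    using assms(2) unfolding e_squared by (simp add: e_def)
  moreover have "(\<Sum>c<n. M r c * e c) = M r c0" for r
    using assms(2) by (simp add: e_def if_distrib cong: if_cong)
  moreover have "sqrt ((M r0 c0)\<^sup>2) \<le> sqrt (\<Sum>r<m. (M r c0)\<^sup>2)"
    using assms(1) by (intro real_sqrt_le_mono member_le_sum) auto
  ultimately show ?thesis
    using opnorm2_upper[where x = e and n = n and m = m and M = M] by simp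
qed

definition tscale :: "real \<Rightarrow> tensor \<Rightarrow> tensor" where
  "tscale a A = (\<lambda>i j k. a * A i j k)"

lemma is_tensor_tscale: "is_tensor N1 N2 N3 A \<Longrightarrow> is_tensor N1 N2 N3 (tscale a A)"
  by (simp add: is_tensor_def tscale_def)

lemma bcirc_tscale: "bcirc N1 N2 N3 (tscale a A) = (\<lambda>r c. a * bcirc N1 N2 N3 A r c)"
  by (auto simp: bcirc_def tscale_def fun_eq_iff)

lemma ttrans_tscale: "ttrans N1 N2 N3 (tscale a A) = tscale a (ttrans N1 N2 N3 A)"
  by (auto simp: ttrans_def tscale_def fun_eq_iff)

lemma tprod_tscale_left: "tprod N1 N2 N3 N4 (tscale a A) B = tscale a (tprod N1 N2 N3 N4 A B)"
  unfolding tprod_def bcirc_tscale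
  by (auto simp: fold_def matmul_def tscale_def fun_eq_iff sum_distrib_left intro!: sum.cong)

lemma tprod_tscale_right: "tprod N1 N2 N3 N4 A (tscale a B) = tscale a (tprod N1 N2 N3 N4 A B)"
  by (auto simp: tprod_def fold_def matmul_def unfold_def tscale_def fun_eq_iff
      sum_distrib_left intro!: sum.cong)

lemma Tspace_tscale:
  assumes "N \<in> Tspace N1 N2 N3 R U V"
  shows "tscale a N \<in> Tspace N1 N2 N3 R U V"
proof -
  obtain Y W where
    N: "N = tadd (tprod N1 R N3 N2 U (ttrans N2 R N3 Y)) (tprod N1 R N3 N2 W (ttrans N2 R N3 V))"
    and "is_tensor N2 R N3 Y" "is_tensor N1 R N3 W"
    using assms unfolding Tspace_def by blast
  moreover have "tscale a N =
      tadd (tprod N1 R N3 N2 U (ttrans N2 R N3 (tscale a Y)))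
           (tprod N1 R N3 N2 (tscale a W) (ttrans N2 R N3 V))"
    unfolding N ttrans_tscale tprod_tscale_right tprod_tscale_left
    by (simp add: tadd_def tscale_def fun_eq_iff distrib_left)
  ultimately show ?thesis
    unfolding Tspace_def by (blast intro: is_tensor_tscale)
qed

lemma Omega_tscale: "N \<in> Omega N1 N2 N3 E \<Longrightarrow> tscale a N \<in> Omega N1 N2 N3 E"
  by (auto simp: Omega_def tscale_def is_tensor_def)

lemma zero_tensor_in_Tspace: "zero_tensor \<in> Tspace N1 N2 N3 R U V"
proof -
  have "zero_tensor = tadd (tprod N1 R N3 N2 U (ttrans N2 R N3 zero_tensor))
                           (tprod N1 R N3 N2 zero_tensor (ttrans N2 R N3 V))"
    by (simp add: tadd_def tprod_def fold_def matmul_def unfold_def ttrans_def bcirc_def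
        zero_tensor_def fun_eq_iff)
  moreover have "is_tensor N2 R N3 zero_tensor" "is_tensor N1 R N3 zero_tensor"
    by (auto simp: is_tensor_def zero_tensor_def)
  ultimately show ?thesis
    unfolding Tspace_def by blast
qed

lemma zero_tensor_in_Omega: "zero_tensor \<in> Omega N1 N2 N3 E"
  by (simp add: Omega_def is_tensor_def zero_tensor_def)

lemma finite_abs_entries:
  fixes A :: tensor
  shows "finite {\<bar>A i j k\<bar> | i j k. i < N1 \<and> j < N2 \<and> k < N3}"
proof -
  have "{\<bar>A i j k\<bar> | i j k. i < N1 \<and> j < N2 \<and> k < N3}
        \<subseteq> (\<lambda>(i, j, k). \<bar>A i j k\<bar>) ` ({..<N1} \<times> {..<N2} \<times> {..<N3})"
    by force
  then show ?thesis
    by (rule finite_subset) (intro finite_imageI finite_cartesian_product; simp)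
qed

lemma abs_entry_le_infnorm:
  "i < N1 \<Longrightarrow> j < N2 \<Longrightarrow> k < N3 \<Longrightarrow> \<bar>A i j k\<bar> \<le> infnorm N1 N2 N3 A"
  unfolding infnorm_def by (rule Max_ge) (use finite_abs_entries in auto)

lemma infnorm_nonneg: "0 \<le> infnorm N1 N2 N3 A"
  unfolding infnorm_def by (rule Max_ge) (use finite_abs_entries in auto)

lemma infnorm_le:
  assumes "0 \<le> b" "\<And>i j k. i < N1 \<Longrightarrow> j < N2 \<Longrightarrow> k < N3 \<Longrightarrow> \<bar>A i j k\<bar> \<le> b"
  shows "infnorm N1 N2 N3 A \<le> b"
  unfolding infnorm_def using finite_abs_entries[of A N1 N2 N3] assms by (auto simp: Max_le_iff)

lemma infnorm_pos:
  assumes "is_tensor N1 N2 N3 A" "A \<noteq> zero_tensor"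
  shows "0 < infnorm N1 N2 N3 A"
proof -
  obtain i j k where "A i j k \<noteq> 0"
    using assms(2) by (auto simp: zero_tensor_def fun_eq_iff)
  moreover from this have "i < N1" "j < N2" "k < N3"
    using assms(1) unfolding is_tensor_def by blast+
  ultimately show ?thesis
    using abs_entry_le_infnorm[of i N1 j N2 k N3 A] by linarith
qed

lemma infnorm_tscale_le:
  assumes "0 \<le> a"
  shows "infnorm N1 N2 N3 (tscale a A) \<le> a * infnorm N1 N2 N3 A"
  using assms infnorm_nonneg abs_entry_le_infnorm
  by (intro infnorm_le) (auto simp: tscale_def abs_mult intro!: mult_left_mono)

lemma infnorm_tscale:
  assumes "0 < a"
  shows "infnorm N1 N2 N3 (tscale a A) = a * infnorm N1 N2 N3 A"
proof (rule antisym)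
  have "infnorm N1 N2 N3 A = infnorm N1 N2 N3 (tscale (1 / a) (tscale a A))"
    using assms by (simp add: tscale_def)
  also have "\<dots> \<le> (1 / a) * infnorm N1 N2 N3 (tscale a A)"
    using assms by (intro infnorm_tscale_le) simp
  finally show "a * infnorm N1 N2 N3 A \<le> infnorm N1 N2 N3 (tscale a A)"
    using assms by (simp add: field_simps)
qed (use assms infnorm_tscale_le in simp)

lemma specnorm_tscale: "0 < a \<Longrightarrow> specnorm N1 N2 N3 (tscale a A) = a * specnorm N1 N2 N3 A"
  unfolding specnorm_def bcirc_tscale by (rule opnorm2_scale)

lemma abs_entry_le_specnorm:
  assumes "i < N1" "j < N2" "k < N3"
  shows "\<bar>A i j k\<bar> \<le> specnorm N1 N2 N3 A"
proof -
  have "k * N1 + i < (k + 1) * N1"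
    using assms(1) by simp
  also have "\<dots> \<le> N3 * N1"
    using assms(3) by (intro mult_le_mono1) simp
  finally have row: "k * N1 + i < N1 * N3"
    by (simp add: mult.commute)
  have "N2 * 1 \<le> N2 * N3"
    using assms(3) by (intro mult_le_mono2) simp
  then have col: "j < N2 * N3"
    using assms(2) by linarith
  have "bcirc N1 N2 N3 A (k * N1 + i) j = A i j k"
    using assms row col by (simp add: bcirc_def)
  then show ?thesis
    using abs_entry_le_opnorm2[OF row col, of "bcirc N1 N2 N3 A"] unfolding specnorm_def by simp
qed

lemma infnorm_le_specnorm: "infnorm N1 N2 N3 A \<le> specnorm N1 N2 N3 A"
proof (rule infnorm_le)
  show "0 \<le> specnorm N1 N2 N3 A"
    unfolding specnorm_def by (rule opnorm2_nonneg)
qed (rule abs_entry_le_specnorm)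

lemma abs_bcirc_le_infnorm: "\<bar>bcirc N1 N2 N3 A r c\<bar> \<le> infnorm N1 N2 N3 A"
proof (cases "r < N1 * N3 \<and> c < N2 * N3")
  case True
  then have "0 < N1" "0 < N2" "0 < N3"
    by (auto intro: gr0I)
  then have "r mod N1 < N1" "c mod N2 < N2"
    and "nat ((int (r div N1) - int (c div N2)) mod int N3) < N3"
    by (simp_all add: nat_less_iff)
  with True show ?thesis
    by (simp add: bcirc_def abs_entry_le_infnorm)
qed (auto simp: bcirc_def infnorm_nonneg)

lemma specnorm_le_infnorm:
  "specnorm N1 N2 N3 A \<le> sqrt (real (N1 * N3)) * real (N2 * N3) * infnorm N1 N2 N3 A"
proof -
  let ?K = "infnorm N1 N2 N3 A"
  have "(\<Sum>c<N2 * N3. \<bar>bcirc N1 N2 N3 A r c\<bar>) \<le> real (N2 * N3) * ?K" for r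
    using sum_mono[of "{..<N2 * N3}" "\<lambda>c. \<bar>bcirc N1 N2 N3 A r c\<bar>" "\<lambda>_. ?K"]
    by (simp add: abs_bcirc_le_infnorm)
  then have "(\<Sum>c<N2 * N3. \<bar>bcirc N1 N2 N3 A r c\<bar>)\<^sup>2 \<le> (real (N2 * N3) * ?K)\<^sup>2" for r
    by (intro power_mono) (auto intro: sum_nonneg)
  then have "(\<Sum>r<N1 * N3. (\<Sum>c<N2 * N3. \<bar>bcirc N1 N2 N3 A r c\<bar>)\<^sup>2)
             \<le> (\<Sum>r<N1 * N3. (real (N2 * N3) * ?K)\<^sup>2)"
    by (intro sum_mono)
  then have "opnorm2 (N1 * N3) (N2 * N3) (bcirc N1 N2 N3 A)
             \<le> sqrt (real (N1 * N3) * (real (N2 * N3) * ?K)\<^sup>2)"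
    using opnorm2_le_row_sums[of "N1 * N3" "N2 * N3" "bcirc N1 N2 N3 A"]
    by (simp add: order_trans)
  then show ?thesis
    by (simp add: specnorm_def real_sqrt_mult infnorm_nonneg)
qed

lemma infnorm_div_specnorm_le_xi:
  assumes "N \<in> Tspace N1 N2 N3 R U V" "0 < specnorm N1 N2 N3 N"
  shows "infnorm N1 N2 N3 N / specnorm N1 N2 N3 N \<le> xi N1 N2 N3 R U V"
proof -
  have "bdd_above {infnorm N1 N2 N3 M | M. M \<in> Tspace N1 N2 N3 R U V \<and> specnorm N1 N2 N3 M \<le> 1}"
    by (rule bdd_aboveI[where M = 1]) (use infnorm_le_specnorm order_trans in blast)
  then show ?thesis
    unfolding xi_def
    using assms Tspace_tscale infnorm_tscale specnorm_tscale
    by (intro ratio_le_Sup_of_homogeneous[where smult = tscale])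
qed

lemma specnorm_div_infnorm_le_mu:
  assumes "N \<in> Omega N1 N2 N3 E" "0 < infnorm N1 N2 N3 N"
  shows "specnorm N1 N2 N3 N / infnorm N1 N2 N3 N \<le> mu N1 N2 N3 E"
proof -
  let ?C = "sqrt (real (N1 * N3)) * real (N2 * N3)"
  have "specnorm N1 N2 N3 M \<le> ?C" if "infnorm N1 N2 N3 M \<le> 1" for M
    using specnorm_le_infnorm[of N1 N2 N3 M] mult_left_mono[OF that, of ?C] by simp
  then have "bdd_above {specnorm N1 N2 N3 M | M. M \<in> Omega N1 N2 N3 E \<and> infnorm N1 N2 N3 M \<le> 1}"
    by (intro bdd_aboveI[where M = ?C]) blast
  then show ?thesis
    unfolding mu_def
    using assms Omega_tscale infnorm_tscale specnorm_tscale
    by (intro ratio_le_Sup_of_homogeneous[where smult = tscale])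
qed

lemma one_le_xi_mult_mu:
  assumes T: "N \<in> Tspace N1 N2 N3 R U V" and \<Omega>: "N \<in> Omega N1 N2 N3 E"
    and "N \<noteq> zero_tensor"
  shows "1 \<le> xi N1 N2 N3 R U V * mu N1 N2 N3 E"
proof -
  let ?a = "infnorm N1 N2 N3 N" and ?s = "specnorm N1 N2 N3 N"
  have a_pos: "0 < ?a"
    using \<Omega> assms(3) by (intro infnorm_pos) (auto simp: Omega_def)
  then have s_pos: "0 < ?s"
    using infnorm_le_specnorm by (rule less_le_trans)
  have xi: "?a / ?s \<le> xi N1 N2 N3 R U V"
    using T s_pos by (rule infnorm_div_specnorm_le_xi)
  have mu: "?s / ?a \<le> mu N1 N2 N3 E"
    using \<Omega> a_pos by (rule specnorm_div_infnorm_le_mu)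
  have "1 = (?a / ?s) * (?s / ?a)"
    using a_pos s_pos by simp
  also have "\<dots> \<le> xi N1 N2 N3 R U V * mu N1 N2 N3 E"
  proof (rule mult_mono)
    show "0 \<le> xi N1 N2 N3 R U V"
      using divide_pos_pos[OF a_pos s_pos] xi by linarith
  qed (use a_pos s_pos xi mu in simp_all)
  finally show ?thesis .
qed

theorem lemma2:
  fixes N1 N2 N3 R :: nat and L0 E0 U S V :: tensor
  assumes "is_tensor N1 N2 N3 L0"
    and "is_tensor N1 N2 N3 E0"
    and "skinny_tsvd N1 N2 N3 L0 R U S V"
    and "xi N1 N2 N3 R U V * mu N1 N2 N3 E0 < 1"
  shows "Tspace N1 N2 N3 R U V \<inter> Omega N1 N2 N3 E0 = {zero_tensor}"
proof -
  have "N = zero_tensor" if "N \<in> Tspace N1 N2 N3 R U V" "N \<in> Omega N1 N2 N3 E0" for N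
    using one_le_xi_mult_mu[OF that] assms(4) by fastforce
  then show ?thesis
    using zero_tensor_in_Tspace zero_tensor_in_Omega by blast
qed

end
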